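(* Let $F:\mathbb{R}^d\to\mathbb{R}^d$ be smooth and consider $\dot{x}=F(x)$. Let $\Psi:\mathbb{R}^d\times\mathbb{R}^d\to\mathbb{R}^d$ be smooth and satisfy the consistency conditions $$\Psi(x,x)=F(x),\qquad F'(x)=\Psi_1(x,x)+\Psi_2(x,x)\quad\text{for all }x.$$ Here $\Psi_1,\Psi_2$ are the $d\times d$ Jacobian matrices of $\Psi$ with respect to its first and second vector argument. Write $\bar\Psi_2=\Psi_2(\bar x,\bar x)$. Consider the scheme $x_{n+1}-x_n=\delta(\bar x)\,\Psi(x_n,x_{n+1})$ with $$\delta(\bar x)=\big(e^{h_nF'(\bar x)}-1\big)\Big(F'(\bar x)+\bar\Psi_2\big(e^{h_nF'(\bar x)}-1\big)\Big)^{-1}.$$ This scheme is locally exact at $\bar x$.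
   Context: $F'(x)$ denotes the Jacobian matrix of $F$, assumed invertible at $\bar x$, and $1$ denotes the identity matrix. The linearization of $\dot{x}=F(x)$ around $\bar x$ is $\dot\xi=F'(\bar x)\xi+F(\bar x)$ with $\xi=x-\bar x$. Its exact discretization with time step $h_n$ is $$\xi_{n+1}=e^{h_nF'(\bar x)}\xi_n+\big(e^{h_nF'(\bar x)}-1\big)F'(\bar x)^{-1}F(\bar x).$$ The linearization of the scheme at $\bar x$ is obtained as follows: - substitute $x_n=\bar x+\xi_n$ and $x_{n+1}=\bar x+\xi_{n+1}$; - keep the matrix $\delta(\bar x)$ (which depends only on $\bar x$ and $h_n$) fixed; - keep only terms up to first order in $\xi_n,\xi_{n+1}$. The scheme is locally exact at $\bar x$ if this linear relation is identical with the exact discretization above, as a relation determining $\xi_{n+1}$ from $\xi_n$. *)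

theory Defs
  imports "HOL-Analysis.Analysis"
begin

text \<open>Matrix powers and the matrix exponential for square matrices real^'n^'n
  (the library's exp is not available for this type, since the componentwise
  product on vec is not matrix multiplication).\<close>

fun mat_pow :: "real^'n^'n \<Rightarrow> nat \<Rightarrow> real^'n^'n" where
  "mat_pow A 0 = mat 1"
| "mat_pow A (Suc k) = A ** mat_pow A k"

definition mat_exp :: "real^'n^'n \<Rightarrow> real^'n^'n" where
  "mat_exp A = (\<Sum>k. (1 / fact k) *\<^sub>R mat_pow A k)"

end

theory Submission
  imports Defs
begin

text \<open>The scheme's relation between \<open>\<xi>\<close> and \<open>\<xi>'\<close> is linear. Put \<open>A = F'(xbar)\<close>,
  \<open>E = e\<^bsup>hA\<^esup>\<close> and write \<open>\<xi>' = \<xi> + (E - 1) w\<close>. Because \<open>A = \<Psi>\<^sub>1 + \<Psi>\<^sub>2\<close>, the \<open>\<Psi>\<^sub>2 (E - 1)\<close> term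
  in the denominator of \<open>\<delta>\<close> cancels the implicit dependence on \<open>\<xi>'\<close>, and the equation for
  \<open>w\<close> collapses to \<open>A w = A \<xi> + F(xbar)\<close>. So \<open>w = \<xi> + A\<^sup>-\<^sup>1 F(xbar)\<close>, which is the exact
  discretization. The smoothness hypotheses only justify the linearization, which the
  statement already spells out.\<close>

lemma matrix_inv_right:
  fixes A :: "'a::field^'n^'n"
  assumes "invertible A"
  shows "A ** matrix_inv A = mat 1"
  using someI_ex[OF assms[unfolded invertible_def]] by (simp add: matrix_inv_def)

lemma matrix_inv_left:
  fixes A :: "'a::field^'n^'n"
  assumes "invertible A"
  shows "matrix_inv A ** A = mat 1"
  using someI_ex[OF assms[unfolded invertible_def]] by (simp add: matrix_inv_def)

lemma matrix_inv_mult_eq_iff: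
  fixes A :: "'a::field^'n^'n"
  assumes "invertible A"
  shows "matrix_inv A *v b = w \<longleftrightarrow> A *v w = b"
  by (metis assms matrix_inv_left matrix_inv_right matrix_vector_mul_assoc matrix_vector_mul_lid)

lemma implicit_linear_step_iff:
  fixes A P Q M :: "'a::field^'n^'n" and c x y :: "'a^'n"
  assumes inv_A: "invertible A" and inv_D: "invertible (A + Q ** M)"
    and split_A: "A = P + Q"
  shows "y - x = (M ** matrix_inv (A + Q ** M)) *v (c + P *v x + Q *v y)
         \<longleftrightarrow> y = (M + mat 1) *v x + (M ** matrix_inv A) *v c"
proof -
  let ?D = "A + Q ** M"
  define w\<^sub>0 where "w\<^sub>0 = x + matrix_inv A *v c"
  have solve_w: "?D *v w = c + P *v x + Q *v (x + M *v w) \<longleftrightarrow> w = w\<^sub>0" for w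
  proof -
    have "?D *v w = c + P *v x + Q *v (x + M *v w) \<longleftrightarrow> A *v w = A *v x + c"
      unfolding split_A
      by (auto simp: matrix_vector_mult_add_rdistrib matrix_vector_right_distrib
                     matrix_vector_mul_assoc[symmetric] algebra_simps)
    also have "\<dots> \<longleftrightarrow> matrix_inv A *v (A *v x + c) = w"
      using matrix_inv_mult_eq_iff[OF inv_A] by metis
    also have "\<dots> \<longleftrightarrow> w = w\<^sub>0"
      by (auto simp: w\<^sub>0_def matrix_vector_right_distrib matrix_vector_mul_assoc
                     matrix_inv_left[OF inv_A])
    finally show ?thesis .
  qed
  have rhs_form: "(M + mat 1) *v x + (M ** matrix_inv A) *v c = x + M *v w\<^sub>0"
    by (simp add: w\<^sub>0_def matrix_vector_mult_add_rdistrib matrix_vector_right_distrib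
                  matrix_vector_mul_assoc)
  show ?thesis
  proof
    assume lhs: "y - x = (M ** matrix_inv ?D) *v (c + P *v x + Q *v y)"
    define w where "w = matrix_inv ?D *v (c + P *v x + Q *v y)"
    have y_eq: "y = x + M *v w"
      using lhs by (simp add: w_def matrix_vector_mul_assoc[symmetric] algebra_simps)
    have "?D *v w = c + P *v x + Q *v (x + M *v w)"
      using matrix_inv_mult_eq_iff[OF inv_D] y_eq w_def by metis
    then show "y = (M + mat 1) *v x + (M ** matrix_inv A) *v c"
      using solve_w y_eq rhs_form by simp
  next
    assume "y = (M + mat 1) *v x + (M ** matrix_inv A) *v c"
    then have y_eq: "y = x + M *v w\<^sub>0"
      using rhs_form by simp
    then have "matrix_inv ?D *v (c + P *v x + Q *v y) = w\<^sub>0"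
      using solve_w matrix_inv_mult_eq_iff[OF inv_D] by metis
    then show "y - x = (M ** matrix_inv ?D) *v (c + P *v x + Q *v y)"
      using y_eq by (simp add: matrix_vector_mul_assoc[symmetric])
  qed
qed

theorem proposition4p3:
  fixes F :: "real^'n \<Rightarrow> real^'n"
    and DF :: "real^'n \<Rightarrow> real^'n^'n"
    and \<Psi> :: "real^'n \<Rightarrow> real^'n \<Rightarrow> real^'n"
    and \<Psi>1 \<Psi>2 :: "real^'n \<Rightarrow> real^'n \<Rightarrow> real^'n^'n"
    and xbar :: "real^'n"
    and h :: real
  assumes F_deriv: "\<And>x. (F has_derivative (\<lambda>v. DF x *v v)) (at x)"
    and \<Psi>_deriv: "\<And>x y. ((\<lambda>p. \<Psi> (fst p) (snd p)) has_derivative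
                     (\<lambda>q. \<Psi>1 x y *v fst q + \<Psi>2 x y *v snd q)) (at (x, y))"
    and cons1: "\<And>x. \<Psi> x x = F x"
    and cons2: "\<And>x. DF x = \<Psi>1 x x + \<Psi>2 x x"
    and inv_DF: "invertible (DF xbar)"
    and inv_den: "invertible (DF xbar + \<Psi>2 xbar xbar ** (mat_exp (h *\<^sub>R DF xbar) - mat 1))"
  shows "let A = DF xbar;
             E = mat_exp (h *\<^sub>R A);
             \<delta> = (E - mat 1) ** matrix_inv (A + \<Psi>2 xbar xbar ** (E - mat 1))
         in \<forall>\<xi> \<xi>'. (\<xi>' - \<xi> = \<delta> *v (\<Psi> xbar xbar + \<Psi>1 xbar xbar *v \<xi> + \<Psi>2 xbar xbar *v \<xi>'))
                   \<longleftrightarrow> \<xi>' = E *v \<xi> + ((E - mat 1) ** matrix_inv A) *v F xbar"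
proof -
  define E where "E = mat_exp (h *\<^sub>R DF xbar)"
  have "\<xi>' - \<xi> = ((E - mat 1) ** matrix_inv (DF xbar + \<Psi>2 xbar xbar ** (E - mat 1)))
                   *v (F xbar + \<Psi>1 xbar xbar *v \<xi> + \<Psi>2 xbar xbar *v \<xi>')
        \<longleftrightarrow> \<xi>' = E *v \<xi> + ((E - mat 1) ** matrix_inv (DF xbar)) *v F xbar" for \<xi> \<xi>'
    using implicit_linear_step_iff[OF inv_DF inv_den[folded E_def] cons2] by simp
  then show ?thesis
    unfolding Let_def E_def[symmetric] cons1 by blast
qed

end
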